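(* Let assortments $S_1,\dots,S_n$ with feature vectors $x_{ti} \in \mathbb{R}^d$ be given, with $V_n = \sum_{t=1}^n\sum_{i\in S_t}x_{ti}x_{ti}^\top$ positive definite. Let the responses $y_1,\dots,y_n$ be drawn from the multinomial logit model with parameter $\theta^*$, independently conditional on the features, and let $\hat\theta$ be the maximum likelihood estimator. Define $$J_n(\theta) = \sum_{t=1}^n\sum_{i\in S_t}\left(p_t(i|S_t,\theta) - p_t(i|S_t,\theta^* )\right)x_{ti}.$$ Then for any $\delta > 0$, with probability at least $1-\delta$, $$\|J_n(\hat\theta)\|_{V_n^{-1}} \le 4\sqrt{2d + \log\frac1\delta}.$$
   Context: Multinomial logit model: $$p_t(i|S_t,\theta) = \frac{\exp(x_{ti}^\top\theta)}{1+\sum_{j\in S_t}\exp(x_{tj}^\top\theta)} \quad (i\in S_t),$$ with outside option $0$ having probability $1/(1+\sum_{j\in S_t}\exp(x_{tj}^\top\theta))$. The response $y_t = (y_{ti})_{i\in S_t\cup\{0\}}$ is one-hot, with $\mathbb{P}(y_{ti} = 1) = p_t(i|S_t,\theta^* )$. The MLE $\hat\theta$ solves $\sum_{t=1}^n\sum_{i\in S_t}\left(p_t(i|S_t,\theta) - y_{ti}\right)x_{ti} = 0$. Also $\|x\|_{V^{-1}} = \sqrt{x^\top V^{-1}x}$. *)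

theory Defs
  imports "HOL-Analysis.Analysis" "HOL-Probability.Probability"
begin

text \<open>Items of round t are of type 'i; the chosen option is 'i option,
  with None encoding the outside option 0.  Features x t i :: real^'d.\<close>

definition mnl_denom :: "(nat \<Rightarrow> 'i set) \<Rightarrow> (nat \<Rightarrow> 'i \<Rightarrow> real^'d) \<Rightarrow> real^'d \<Rightarrow> nat \<Rightarrow> real" where
  "mnl_denom S x \<theta> t = 1 + (\<Sum>j\<in>S t. exp (x t j \<bullet> \<theta>))"

definition mnl_prob :: "(nat \<Rightarrow> 'i set) \<Rightarrow> (nat \<Rightarrow> 'i \<Rightarrow> real^'d) \<Rightarrow> real^'d \<Rightarrow> nat \<Rightarrow> 'i option \<Rightarrow> real" where
  "mnl_prob S x \<theta> t c = (case c of
      None \<Rightarrow> 1 / mnl_denom S x \<theta> t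
    | Some i \<Rightarrow> (if i \<in> S t then exp (x t i \<bullet> \<theta>) / mnl_denom S x \<theta> t else 0))"

definition mnl_pmf :: "(nat \<Rightarrow> 'i set) \<Rightarrow> (nat \<Rightarrow> 'i \<Rightarrow> real^'d) \<Rightarrow> real^'d \<Rightarrow> nat \<Rightarrow> 'i option pmf" where
  "mnl_pmf S x \<theta> t = embed_pmf (mnl_prob S x \<theta> t)"

definition mnl_responses :: "nat \<Rightarrow> (nat \<Rightarrow> 'i set) \<Rightarrow> (nat \<Rightarrow> 'i \<Rightarrow> real^'d) \<Rightarrow> real^'d \<Rightarrow> (nat \<Rightarrow> 'i option) pmf" where
  "mnl_responses n S x \<theta> = Pi_pmf {1..n} None (mnl_pmf S x \<theta>)"

definition onehot :: "'i option \<Rightarrow> 'i \<Rightarrow> real" where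
  "onehot c i = (if c = Some i then 1 else 0)"

definition gram :: "nat \<Rightarrow> (nat \<Rightarrow> 'i set) \<Rightarrow> (nat \<Rightarrow> 'i \<Rightarrow> real^'d) \<Rightarrow> real^'d^'d" where
  "gram n S x = (\<Sum>t\<in>{1..n}. \<Sum>i\<in>S t. (\<chi> a b. (x t i $ a) * (x t i $ b)))"

definition pos_def :: "real^'d^'d \<Rightarrow> bool" where
  "pos_def V \<longleftrightarrow> transpose V = V \<and> (\<forall>v. v \<noteq> 0 \<longrightarrow> v \<bullet> (V *v v) > 0)"

definition inv_weighted_norm :: "real^'d^'d \<Rightarrow> real^'d \<Rightarrow> real" where
  "inv_weighted_norm V z = sqrt (z \<bullet> (matrix_inv V *v z))"

text \<open>Score function whose zero defines the MLE.\<close>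
definition mle_score :: "nat \<Rightarrow> (nat \<Rightarrow> 'i set) \<Rightarrow> (nat \<Rightarrow> 'i \<Rightarrow> real^'d) \<Rightarrow> (nat \<Rightarrow> 'i option) \<Rightarrow> real^'d \<Rightarrow> real^'d" where
  "mle_score n S x y \<theta> = (\<Sum>t\<in>{1..n}. \<Sum>i\<in>S t. (mnl_prob S x \<theta> t (Some i) - onehot (y t) i) *\<^sub>R x t i)"

definition J_n :: "nat \<Rightarrow> (nat \<Rightarrow> 'i set) \<Rightarrow> (nat \<Rightarrow> 'i \<Rightarrow> real^'d) \<Rightarrow> real^'d \<Rightarrow> real^'d \<Rightarrow> real^'d" where
  "J_n n S x \<theta>s \<theta> = (\<Sum>t\<in>{1..n}. \<Sum>i\<in>S t. (mnl_prob S x \<theta> t (Some i) - mnl_prob S x \<theta>s t (Some i)) *\<^sub>R x t i)"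

end

theory Submission
  imports Defs
begin

text \<open>At a maximum likelihood estimate the score vanishes, so J_n(theta_hat) equals the noise
  vector Z = sum_t sum_i (y_ti - p_t(i|theta*)) x_ti, which does not depend on theta_hat at all.
  Hoeffding's lemma in each round and independence across rounds make Z sub-Gaussian with
  variance proxy V_n: E exp(v.Z) <= exp(v'V_n v / 2).  In a V_n-conjugate basis b_1..b_d the
  squared V_n^-1-norm of Z is sum_j W_j^2 for the whitened coordinates
  W_j = b_j.Z / sqrt(b_j'V_n b_j), and W is 1-sub-Gaussian in R^d.  Mixing the exponentials
  exp(k.W - |k|^2) over integer vectors k gives exp(|W|^2/4 - d/4) <= prod_j sum_k exp(k W_j - k^2),
  whose expectation is at most (sum_k exp(-k^2/2))^d <= 6^d; Markov's inequality finishes.\<close>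

section \<open>The multinomial logit response distribution\<close>

lemma mnl_denom_ge_1: "1 \<le> mnl_denom S x \<theta> t"
  unfolding mnl_denom_def by (simp add: sum_nonneg)

lemma mnl_prob_nonneg: "0 \<le> mnl_prob S x \<theta> t c"
  using mnl_denom_ge_1[of S x \<theta> t] by (auto simp: mnl_prob_def split: option.splits)

lemma mnl_prob_eq_0: "c \<notin> insert None (Some ` S t) \<Longrightarrow> mnl_prob S x \<theta> t c = 0"
  by (auto simp: mnl_prob_def split: option.splits)

lemma sum_mnl_prob:
  assumes "finite (S t)"
  shows "(\<Sum>c\<in>insert None (Some ` S t). mnl_prob S x \<theta> t c) = 1"
proof -
  have "(\<Sum>c\<in>insert None (Some ` S t). mnl_prob S x \<theta> t c)
      = (1 + (\<Sum>i\<in>S t. exp (x t i \<bullet> \<theta>))) / mnl_denom S x \<theta> t"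
    using assms by (simp add: sum.reindex mnl_prob_def add_divide_distrib sum_divide_distrib)
  then show ?thesis
    using mnl_denom_ge_1[of S x \<theta> t] by (simp add: mnl_denom_def)
qed

lemma pmf_mnl_pmf:
  assumes "finite (S t)"
  shows "pmf (mnl_pmf S x \<theta> t) c = mnl_prob S x \<theta> t c"
  unfolding mnl_pmf_def
proof (rule pmf_embed_pmf)
  have "(\<integral>\<^sup>+c. ennreal (mnl_prob S x \<theta> t c) \<partial>count_space UNIV)
      = (\<Sum>c\<in>insert None (Some ` S t). ennreal (mnl_prob S x \<theta> t c))"
    using assms by (intro nn_integral_count_space') (auto simp: mnl_prob_eq_0)
  also have "\<dots> = ennreal (\<Sum>c\<in>insert None (Some ` S t). mnl_prob S x \<theta> t c)"
    by (rule sum_ennreal) (rule mnl_prob_nonneg)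
  also have "\<dots> = 1"
    using sum_mnl_prob[of S t, OF assms] by simp
  finally show "(\<integral>\<^sup>+c. ennreal (mnl_prob S x \<theta> t c) \<partial>count_space UNIV) = 1" .
qed (rule mnl_prob_nonneg)

lemma set_pmf_mnl_pmf_subset:
  assumes "finite (S t)"
  shows "set_pmf (mnl_pmf S x \<theta> t) \<subseteq> insert None (Some ` S t)"
proof
  fix c assume "c \<in> set_pmf (mnl_pmf S x \<theta> t)"
  then have "mnl_prob S x \<theta> t c \<noteq> 0"
    by (simp add: set_pmf_eq pmf_mnl_pmf[of S t, OF assms])
  then show "c \<in> insert None (Some ` S t)"
    using mnl_prob_eq_0 by blast
qed

lemma finite_set_pmf_mnl_pmf:
  assumes "finite (S t)"
  shows "finite (set_pmf (mnl_pmf S x \<theta> t))"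
  using assms by (intro finite_subset[OF set_pmf_mnl_pmf_subset]) simp_all

lemma finite_set_pmf_mnl_responses:
  assumes "\<And>t. t \<in> {1..n} \<Longrightarrow> finite (S t)"
  shows "finite (set_pmf (mnl_responses n S x \<theta>))"
proof -
  have "set_pmf (mnl_responses n S x \<theta>) = PiE_dflt {1..n} None (set_pmf \<circ> mnl_pmf S x \<theta>)"
    unfolding mnl_responses_def by (rule set_Pi_pmf) simp
  also have "\<dots> = (\<lambda>h t. if t \<in> {1..n} then h t else None) ` PiE {1..n} (set_pmf \<circ> mnl_pmf S x \<theta>)"
    by (rule dflt_image_PiE[symmetric])
  finally show ?thesis
    using assms by (simp only:) (intro finite_imageI finite_PiE; auto intro!: finite_set_pmf_mnl_pmf)
qed

section \<open>Sub-Gaussianity of the noise vector\<close>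

lemma expectation_exp_centered_le:
  fixes P :: "'a pmf" and f :: "'a \<Rightarrow> real"
  assumes "\<And>c. \<bar>f c\<bar> \<le> R"
  shows "measure_pmf.expectation P (\<lambda>c. exp (f c - measure_pmf.expectation P f)) \<le> exp (R\<^sup>2 / 2)"
proof -
  interpret interval_bounded_random_variable "measure_pmf P" f "-R" R
  proof unfold_locales
    show "AE c in measure_pmf P. f c \<in> {-R..R}"
      using assms by (intro AE_I2) (simp add: abs_le_iff minus_le_iff)
  qed simp
  have "(\<integral>\<^sup>+c. ennreal (exp (1 * (f c - measure_pmf.expectation P f))) \<partial>measure_pmf P)
      \<le> ennreal (exp (1\<^sup>2 * (R - - R)\<^sup>2 / 8))"
    by (rule Hoeffdings_lemma_nn_integral) simp
  also have "1\<^sup>2 * (R - - R)\<^sup>2 / 8 = R\<^sup>2 / 2"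
    by (simp add: power2_eq_square)
  finally show ?thesis
    by (intro integral_real_bounded) simp_all
qed

lemma mnl_round_mgf_le:
  fixes \<alpha> :: "'i \<Rightarrow> real"
  assumes fin: "finite (S t)"
  shows "measure_pmf.expectation (mnl_pmf S x \<theta> t)
           (\<lambda>c. exp (\<Sum>i\<in>S t. (onehot c i - mnl_prob S x \<theta> t (Some i)) * \<alpha> i))
         \<le> exp ((\<Sum>i\<in>S t. (\<alpha> i)\<^sup>2) / 2)"
proof -
  define f where "f c = (\<Sum>i\<in>S t. onehot c i * \<alpha> i)" for c
  have f_Some: "f (Some j) = (if j \<in> S t then \<alpha> j else 0)" for j
  proof -
    have "f (Some j) = (\<Sum>i\<in>S t. if j = i then \<alpha> i else 0)"
      unfolding f_def by (intro sum.cong) (auto simp: onehot_def)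
    then show ?thesis
      using fin by simp
  qed
  have f_None: "f None = 0"
    by (simp add: f_def onehot_def)
  have "\<bar>f c\<bar> \<le> sqrt (\<Sum>i\<in>S t. (\<alpha> i)\<^sup>2)" for c
  proof (cases c)
    case (Some j)
    have "(\<alpha> j)\<^sup>2 \<le> (\<Sum>i\<in>S t. (\<alpha> i)\<^sup>2)" if "j \<in> S t"
      using that fin by (intro member_le_sum) auto
    then show ?thesis
      using Some by (auto simp: f_Some sum_nonneg intro: real_le_rsqrt)
  qed (simp add: f_None sum_nonneg)
  then have hoeffding: "measure_pmf.expectation (mnl_pmf S x \<theta> t)
      (\<lambda>c. exp (f c - measure_pmf.expectation (mnl_pmf S x \<theta> t) f)) \<le> exp ((\<Sum>i\<in>S t. (\<alpha> i)\<^sup>2) / 2)"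
    using expectation_exp_centered_le by (metis real_sqrt_pow2 sum_nonneg zero_le_power2)
  have "measure_pmf.expectation (mnl_pmf S x \<theta> t) f
      = (\<Sum>c\<in>insert None (Some ` S t). f c * pmf (mnl_pmf S x \<theta> t) c)"
    using fin set_pmf_mnl_pmf_subset[of S t x \<theta>] by (intro integral_measure_pmf_real) auto
  also have "\<dots> = (\<Sum>i\<in>S t. mnl_prob S x \<theta> t (Some i) * \<alpha> i)"
    using fin by (simp add: sum.reindex f_None f_Some pmf_mnl_pmf mult.commute)
  finally have "f c - measure_pmf.expectation (mnl_pmf S x \<theta> t) f
      = (\<Sum>i\<in>S t. (onehot c i - mnl_prob S x \<theta> t (Some i)) * \<alpha> i)" for c
    by (simp add: f_def left_diff_distrib sum_subtractf)
  with hoeffding show ?thesis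
    by simp
qed

definition mnl_noise :: "nat \<Rightarrow> (nat \<Rightarrow> 'i set) \<Rightarrow> (nat \<Rightarrow> 'i \<Rightarrow> real^'d) \<Rightarrow> real^'d \<Rightarrow>
    (nat \<Rightarrow> 'i option) \<Rightarrow> real^'d" where
  "mnl_noise n S x \<theta> y =
     (\<Sum>t\<in>{1..n}. \<Sum>i\<in>S t. (onehot (y t) i - mnl_prob S x \<theta> t (Some i)) *\<^sub>R x t i)"

lemma J_n_eq_mnl_noise:
  assumes "mle_score n S x y \<theta> = 0"
  shows "J_n n S x \<theta>s \<theta> = mnl_noise n S x \<theta>s y"
proof -
  have "J_n n S x \<theta>s \<theta> = mnl_noise n S x \<theta>s y + mle_score n S x y \<theta>"
    unfolding J_n_def mnl_noise_def mle_score_def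
    by (simp add: sum.distrib[symmetric] scaleR_add_left[symmetric])
  with assms show ?thesis
    by simp
qed

lemma gram_mult_vector: "gram n S x *v v = (\<Sum>t\<in>{1..n}. \<Sum>i\<in>S t. (x t i \<bullet> v) *\<^sub>R x t i)"
proof -
  have outer: "(\<chi> a b. u $ a * u $ b) *v w = (u \<bullet> w) *\<^sub>R u" for u w :: "real^'d"
    by (simp add: vec_eq_iff matrix_vector_mult_def inner_vec_def sum_distrib_left mult_ac)
  have sum_mult: "(\<Sum>k\<in>K. M k) *v w = (\<Sum>k\<in>K. M k *v w)"
    for K :: "'k set" and M :: "'k \<Rightarrow> real^'d^'d" and w
    by (induction K rule: infinite_finite_induct) (auto simp: matrix_vector_mult_add_rdistrib)
  show ?thesis
    unfolding gram_def by (simp add: sum_mult outer)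
qed

lemma gram_quadratic_form: "v \<bullet> (gram n S x *v v) = (\<Sum>t\<in>{1..n}. \<Sum>i\<in>S t. (v \<bullet> x t i)\<^sup>2)"
  unfolding gram_mult_vector by (simp add: inner_sum_right power2_eq_square inner_commute)

lemma mnl_noise_mgf_le:
  assumes "\<And>t. t \<in> {1..n} \<Longrightarrow> finite (S t)"
  shows "measure_pmf.expectation (mnl_responses n S x \<theta>) (\<lambda>y. exp (v \<bullet> mnl_noise n S x \<theta> y))
         \<le> exp (v \<bullet> (gram n S x *v v) / 2)"
proof -
  define G where "G t c = (\<Sum>i\<in>S t. (onehot c i - mnl_prob S x \<theta> t (Some i)) * (v \<bullet> x t i))" for t c
  have "exp (v \<bullet> mnl_noise n S x \<theta> y) = (\<Prod>t\<in>{1..n}. exp (G t (y t)))" for y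
    unfolding mnl_noise_def G_def by (simp add: inner_sum_right exp_sum)
  then have "measure_pmf.expectation (mnl_responses n S x \<theta>) (\<lambda>y. exp (v \<bullet> mnl_noise n S x \<theta> y))
      = (\<Prod>t\<in>{1..n}. measure_pmf.expectation (mnl_pmf S x \<theta> t) (\<lambda>c. exp (G t c)))"
    unfolding mnl_responses_def using assms
    by (simp only:) (intro expectation_prod_Pi_pmf integrable_measure_pmf_finite finite_set_pmf_mnl_pmf; auto)
  also have "\<dots> \<le> (\<Prod>t\<in>{1..n}. exp ((\<Sum>i\<in>S t. (v \<bullet> x t i)\<^sup>2) / 2))"
    unfolding G_def using assms
    by (intro prod_mono conjI integral_nonneg mnl_round_mgf_le) auto
  also have "\<dots> = exp (v \<bullet> (gram n S x *v v) / 2)"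
    unfolding gram_quadratic_form by (simp add: exp_sum sum_divide_distrib)
  finally show ?thesis .
qed

section \<open>Conjugate bases of a positive definite matrix\<close>

lemma inner_matrix_conjugate_combination:
  fixes V :: "real^'d^'d"
  assumes "finite B" "b \<in> B" "pairwise (\<lambda>b c. b \<bullet> (V *v c) = 0) B"
  shows "b \<bullet> (V *v (\<Sum>c\<in>B. l c *\<^sub>R c)) = l b * (b \<bullet> (V *v b))"
proof -
  have "b \<bullet> (V *v (\<Sum>c\<in>B. l c *\<^sub>R c)) = (\<Sum>c\<in>B. l c * (b \<bullet> (V *v c)))"
    by (simp add: linear_sum[OF matrix_vector_mul_linear] matrix_vector_mult_scaleR inner_sum_right)
  also have "\<dots> = l b * (b \<bullet> (V *v b)) + (\<Sum>c\<in>B - {b}. l c * (b \<bullet> (V *v c)))"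
    using assms by (simp add: sum.remove)
  also have "(\<Sum>c\<in>B - {b}. l c * (b \<bullet> (V *v c))) = 0"
    using assms by (intro sum.neutral) (auto simp: pairwise_def)
  finally show ?thesis
    by simp
qed

lemma quadratic_form_conjugate_combination:
  fixes V :: "real^'d^'d"
  assumes "finite B" "pairwise (\<lambda>b c. b \<bullet> (V *v c) = 0) B"
  shows "(\<Sum>b\<in>B. l b *\<^sub>R b) \<bullet> (V *v (\<Sum>c\<in>B. l c *\<^sub>R c)) = (\<Sum>b\<in>B. (l b)\<^sup>2 * (b \<bullet> (V *v b)))"
  using assms
  by (simp add: inner_sum_left inner_matrix_conjugate_combination power2_eq_square mult.assoc)

lemma exists_conjugate_basis:
  fixes V :: "real^'d^'d"
  assumes "pos_def V"
  obtains B where "finite B" "card B = CARD('d)" "0 \<notin> B" "pairwise (\<lambda>b c. b \<bullet> (V *v c) = 0) B"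
proof -
  have sym: "u \<bullet> (V *v w) = w \<bullet> (V *v u)" for u w
    using assms unfolding pos_def_def by (metis dot_lmul_matrix inner_commute vector_transpose_matrix)
  have pos: "v \<noteq> 0 \<Longrightarrow> 0 < v \<bullet> (V *v v)" for v
    using assms by (simp add: pos_def_def)
  have "k \<le> CARD('d) \<Longrightarrow>
      \<exists>B. finite B \<and> card B = k \<and> 0 \<notin> B \<and> pairwise (\<lambda>b c. b \<bullet> (V *v c) = 0) B" for k
  proof (induction k)
    case (Suc k)
    then obtain B where B: "finite B" "card B = k" "0 \<notin> B" "pairwise (\<lambda>b c. b \<bullet> (V *v c) = 0) B"
      by auto
    have "span ((*v) V ` B) \<noteq> UNIV"
    proof
      assume "span ((*v) V ` B) = UNIV"
      then have "CARD('d) \<le> card ((*v) V ` B)"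
        using B(1) dim_le_card[of UNIV "(*v) V ` B"] by simp
      also have "\<dots> \<le> k"
        using B(2) card_image_le[OF B(1)] by simp
      finally show False
        using Suc.prems by simp
    qed
    then obtain a where a: "a \<noteq> 0" "\<forall>z\<in>span ((*v) V ` B). a \<bullet> z = 0"
      using span_not_UNIV_orthogonal by blast
    have aB: "a \<bullet> (V *v b) = 0" "b \<bullet> (V *v a) = 0" if "b \<in> B" for b
      using a(2) that sym[of b a] by (simp_all add: span_base)
    have "a \<notin> B"
      using aB pos[OF a(1)] by force
    then show ?case
      using B a(1) aB by (intro exI[of _ "insert a B"]) (auto simp: pairwise_insert)
  qed (intro exI[of _ "{}"]; simp)
  then show ?thesis
    using that by blast
qed

lemma matrix_mul_matrix_inv_pos_def:
  fixes V :: "real^'d^'d"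
  assumes "pos_def V"
  shows "V ** matrix_inv V = mat 1"
proof -
  have "inj ((*v) V)"
  proof (rule injI)
    fix u w
    assume "V *v u = V *v w"
    then have "(u - w) \<bullet> (V *v (u - w)) = 0"
      by (simp add: matrix_vector_mult_diff_distrib)
    then show "u = w"
      using assms unfolding pos_def_def by (metis eq_iff_diff_eq_0 less_irrefl)
  qed
  then have "invertible V"
    using matrix_left_invertible_injective invertible_left_inverse by blast
  then have "\<exists>A'. V ** A' = mat 1 \<and> A' ** V = mat 1"
    by (simp add: invertible_def)
  then show ?thesis
    unfolding matrix_inv_def by (rule someI2_ex) simp
qed

lemma inverse_quadratic_form_conjugate_basis:
  fixes V :: "real^'d^'d"
  assumes pd: "pos_def V"
    and B: "finite B" "card B = CARD('d)" "0 \<notin> B" "pairwise (\<lambda>b c. b \<bullet> (V *v c) = 0) B"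
  shows "z \<bullet> (matrix_inv V *v z) = (\<Sum>b\<in>B. (b \<bullet> z)\<^sup>2 / (b \<bullet> (V *v b)))"
proof -
  have pos: "0 < b \<bullet> (V *v b)" if "b \<in> B" for b
    using pd B(3) that unfolding pos_def_def by metis
  have "independent B"
  proof
    assume "dependent B"
    then obtain l b where "(\<Sum>v\<in>B. l v *\<^sub>R v) = 0" "b \<in> B" "l b \<noteq> 0"
      using dependent_finite[OF B(1)] by auto
    then show False
      using inner_matrix_conjugate_combination[OF B(1) _ B(4), of b l] pos[of b] by simp
  qed
  then have "dim B = CARD('d)"
    using B(2) by (simp add: dim_eq_card_independent)
  then have "span B = UNIV"
    using dim_eq_full[of B] by simp
  then obtain l where l: "matrix_inv V *v z = (\<Sum>c\<in>B. l c *\<^sub>R c)"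
    using span_finite[OF B(1)] by blast
  have Vl: "V *v (\<Sum>c\<in>B. l c *\<^sub>R c) = z"
    unfolding l[symmetric] by (simp add: matrix_vector_mul_assoc matrix_mul_matrix_inv_pos_def[OF pd])
  have coeff: "l b = (b \<bullet> z) / (b \<bullet> (V *v b))" if "b \<in> B" for b
    using inner_matrix_conjugate_combination[OF B(1) that B(4), of l] pos[OF that]
    unfolding Vl by simp
  have "z \<bullet> (matrix_inv V *v z) = (\<Sum>b\<in>B. l b * (b \<bullet> z))"
    unfolding l by (simp add: inner_sum_right inner_commute)
  also have "\<dots> = (\<Sum>b\<in>B. (b \<bullet> z)\<^sup>2 / (b \<bullet> (V *v b)))"
    by (intro sum.cong) (simp_all add: coeff power2_eq_square)
  finally show ?thesis .
qed

section \<open>A tail bound for sub-Gaussian vectors\<close>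

lemma exp_neg_square_half_le: "exp (-(real_of_int k)\<^sup>2 / 2) \<le> 2 * (1/2) ^ nat \<bar>k\<bar>"
proof -
  have "2 * \<bar>real_of_int k\<bar> - 1 \<le> (real_of_int k)\<^sup>2"
    using zero_le_power2[of "\<bar>real_of_int k\<bar> - 1"] by (simp add: power2_eq_square algebra_simps)
  then have "exp (-(real_of_int k)\<^sup>2 / 2) \<le> exp (1/2 + real (nat \<bar>k\<bar>) * (- 1))"
    by simp
  also have "\<dots> = exp (1/2) * exp (- 1) ^ nat \<bar>k\<bar>"
    by (simp only: exp_add exp_of_nat_mult)
  also have "\<dots> \<le> 2 * (1/2) ^ nat \<bar>k\<bar>"
  proof (intro mult_mono power_mono)
    have "(exp (1/2::real))\<^sup>2 = exp 1"
      by (simp add: power2_eq_square flip: exp_add)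
    also have "\<dots> \<le> 2\<^sup>2"
      using exp_le by simp
    finally show "exp (1/2::real) \<le> 2"
      by (rule power2_le_imp_le) simp
    have "2 \<le> exp (1::real)"
      using exp_ge_add_one_self[of 1] by simp
    then show "exp (- 1::real) \<le> 1/2"
      by (simp add: exp_minus field_simps)
  qed simp_all
  finally show ?thesis .
qed

lemma sum_symmetric_geometric: "(\<Sum>k\<in>{-int m..int m}. 2 * (1/2::real) ^ nat \<bar>k\<bar>) = 6 - 4 * (1/2) ^ m"
proof (induction m)
  case (Suc m)
  have "{-int (Suc m)..int (Suc m)} = insert (- int (Suc m)) (insert (int (Suc m)) {-int m..int m})"
    by auto
  then have "(\<Sum>k\<in>{-int (Suc m)..int (Suc m)}. 2 * (1/2::real) ^ nat \<bar>k\<bar>)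
      = 4 * (1/2) ^ Suc m + (\<Sum>k\<in>{-int m..int m}. 2 * (1/2::real) ^ nat \<bar>k\<bar>)"
    by (simp add: nat_add_distrib)
  with Suc.IH show ?case
    by simp
qed simp

lemma sum_exp_neg_square_half_le: "(\<Sum>k\<in>{-int m..int m}. exp (-(real_of_int k)\<^sup>2 / 2)) \<le> 6"
proof -
  have "(\<Sum>k\<in>{-int m..int m}. exp (-(real_of_int k)\<^sup>2 / 2))
      \<le> (\<Sum>k\<in>{-int m..int m}. 2 * (1/2::real) ^ nat \<bar>k\<bar>)"
    by (intro sum_mono exp_neg_square_half_le)
  then show ?thesis
    unfolding sum_symmetric_geometric using zero_le_power[of "1/2::real" m] by linarith
qed

lemma exp_square_le_sum_exp_tilt:
  fixes w :: real and N :: nat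
  assumes "\<bar>w\<bar> \<le> real N" "1 \<le> N"
  shows "exp (w\<^sup>2 / 4 - 1/4) \<le> (\<Sum>k\<in>{-int N..int N}. exp (real_of_int k * w - (real_of_int k)\<^sup>2))"
proof -
  \<comment> \<open>k w - k^2 = w^2/4 - (k - w/2)^2, so the nearest integer to w/2 loses at most 1/4.\<close>
  define k where "k = round (w / 2)"
  have k: "\<bar>real_of_int k - w/2\<bar> \<le> 1/2"
    unfolding k_def by (rule of_int_round_abs_le)
  then have "real_of_int \<bar>k\<bar> \<le> real N"
    using assms by linarith
  then have "k \<in> {-int N..int N}"
    by auto
  have "(real_of_int k - w/2)\<^sup>2 \<le> (1/2)\<^sup>2"
    using k by (metis abs_ge_zero power2_abs power_mono)
  then have "exp (w\<^sup>2 / 4 - 1/4) \<le> exp (real_of_int k * w - (real_of_int k)\<^sup>2)"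
    by (simp add: power2_eq_square algebra_simps)
  also have "\<dots> \<le> (\<Sum>k\<in>{-int N..int N}. exp (real_of_int k * w - (real_of_int k)\<^sup>2))"
    using \<open>k \<in> {-int N..int N}\<close> by (intro member_le_sum) auto
  finally show ?thesis .
qed

lemma expectation_prod_sum_exp_tilt_le:
  fixes P :: "'a pmf" and W :: "'b \<Rightarrow> 'a \<Rightarrow> real" and K :: "int set"
  assumes "finite (set_pmf P)" "finite B" "finite K"
    and mgf: "\<And>l. measure_pmf.expectation P (\<lambda>y. exp (\<Sum>b\<in>B. l b * W b y)) \<le> exp ((\<Sum>b\<in>B. (l b)\<^sup>2) / 2)"
  shows "measure_pmf.expectation P (\<lambda>y. \<Prod>b\<in>B. \<Sum>k\<in>K. exp (real_of_int k * W b y - (real_of_int k)\<^sup>2))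
         \<le> (\<Sum>k\<in>K. exp (-(real_of_int k)\<^sup>2 / 2)) ^ card B"
proof -
  have tilt: "(\<Prod>b\<in>B. exp (real_of_int (g b) * W b y - (real_of_int (g b))\<^sup>2))
      = exp (\<Sum>b\<in>B. real_of_int (g b) * W b y) / exp (\<Sum>b\<in>B. (real_of_int (g b))\<^sup>2)" for g y
    using assms(2) by (simp add: exp_diff prod_dividef exp_sum)
  have gauss: "exp ((\<Sum>b\<in>B. (real_of_int (g b))\<^sup>2) / 2) / exp (\<Sum>b\<in>B. (real_of_int (g b))\<^sup>2)
      = (\<Prod>b\<in>B. exp (-(real_of_int (g b))\<^sup>2 / 2))" for g
    using assms(2) by (simp add: exp_sum[symmetric] sum_negf flip: exp_diff sum_divide_distrib)
  have "measure_pmf.expectation P (\<lambda>y. \<Prod>b\<in>B. \<Sum>k\<in>K. exp (real_of_int k * W b y - (real_of_int k)\<^sup>2))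
      = (\<Sum>g\<in>PiE B (\<lambda>_. K). measure_pmf.expectation P (\<lambda>y. exp (\<Sum>b\<in>B. real_of_int (g b) * W b y))
           / exp (\<Sum>b\<in>B. (real_of_int (g b))\<^sup>2))"
    using assms(1-3) by (simp add: prod_sum_PiE tilt integrable_measure_pmf_finite)
  also have "\<dots> \<le> (\<Sum>g\<in>PiE B (\<lambda>_. K). \<Prod>b\<in>B. exp (-(real_of_int (g b))\<^sup>2 / 2))"
    unfolding gauss[symmetric] by (intro sum_mono divide_right_mono mgf) simp
  also have "\<dots> = (\<Prod>b\<in>B. \<Sum>k\<in>K. exp (-(real_of_int k)\<^sup>2 / 2))"
    using assms(2,3) by (rule prod_sum_PiE[symmetric])
  also have "\<dots> = (\<Sum>k\<in>K. exp (-(real_of_int k)\<^sup>2 / 2)) ^ card B"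
    by simp
  finally show ?thesis .
qed

lemma expectation_exp_quarter_sum_squares_le:
  fixes P :: "'a pmf" and W :: "'b \<Rightarrow> 'a \<Rightarrow> real"
  assumes finP: "finite (set_pmf P)" and finB: "finite B"
    and mgf: "\<And>l. measure_pmf.expectation P (\<lambda>y. exp (\<Sum>b\<in>B. l b * W b y)) \<le> exp ((\<Sum>b\<in>B. (l b)\<^sup>2) / 2)"
  shows "measure_pmf.expectation P (\<lambda>y. exp ((\<Sum>b\<in>B. (W b y)\<^sup>2) / 4)) \<le> (6 * exp (1/4)) ^ card B"
proof -
  \<comment> \<open>On the finite support W is bounded, so finitely many integer tilts suffice.\<close>
  define M where "M = (\<Sum>b\<in>B. \<Sum>y\<in>set_pmf P. \<bar>W b y\<bar>)"
  have "\<bar>W b y\<bar> \<le> M" if "b \<in> B" "y \<in> set_pmf P" for b y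
  proof -
    have "\<bar>W b y\<bar> \<le> (\<Sum>y\<in>set_pmf P. \<bar>W b y\<bar>)"
      using finP that by (intro member_le_sum) auto
    also have "\<dots> \<le> M"
      unfolding M_def using finB that by (intro member_le_sum sum_nonneg) auto
    finally show ?thesis .
  qed
  moreover obtain N where "M \<le> real N"
    using real_arch_simple by blast
  ultimately have W_le: "\<bar>W b y\<bar> \<le> real (Suc N)" if "b \<in> B" "y \<in> set_pmf P" for b y
    using that by fastforce
  define F where "F y = (\<Prod>b\<in>B. \<Sum>k\<in>{-int (Suc N)..int (Suc N)}. exp (real_of_int k * W b y - (real_of_int k)\<^sup>2))"
    for y
  have "exp ((\<Sum>b\<in>B. (W b y)\<^sup>2) / 4) \<le> exp (1/4) ^ card B * F y" if "y \<in> set_pmf P" for y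
  proof -
    have "exp ((\<Sum>b\<in>B. (W b y)\<^sup>2) / 4) = exp (1/4) ^ card B * (\<Prod>b\<in>B. exp ((W b y)\<^sup>2 / 4 - 1/4))"
      using finB by (simp add: exp_sum[symmetric] sum_subtractf sum_divide_distrib flip: exp_of_nat_mult exp_add)
    also have "\<dots> \<le> exp (1/4) ^ card B * F y"
      unfolding F_def using W_le that by (intro mult_left_mono prod_mono conjI exp_square_le_sum_exp_tilt) auto
    finally show ?thesis .
  qed
  then have "measure_pmf.expectation P (\<lambda>y. exp ((\<Sum>b\<in>B. (W b y)\<^sup>2) / 4))
      \<le> measure_pmf.expectation P (\<lambda>y. exp (1/4) ^ card B * F y)"
    using finP by (intro integral_mono_AE AE_pmfI integrable_measure_pmf_finite)
  also have "\<dots> \<le> exp (1/4) ^ card B * 6 ^ card B"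
  proof -
    have "measure_pmf.expectation P F \<le> 6 ^ card B"
      unfolding F_def using finP finB mgf
      by (intro order_trans[OF expectation_prod_sum_exp_tilt_le] power_mono
          sum_exp_neg_square_half_le sum_nonneg) auto
    then show ?thesis
      by (simp add: mult_left_mono)
  qed
  finally show ?thesis
    by (simp add: power_mult_distrib mult.commute)
qed

lemma subgaussian_sum_squares_tail:
  fixes P :: "'a pmf" and W :: "'b \<Rightarrow> 'a \<Rightarrow> real"
  assumes finP: "finite (set_pmf P)" and finB: "finite B" and "0 < \<delta>"
    and mgf: "\<And>l. measure_pmf.expectation P (\<lambda>y. exp (\<Sum>b\<in>B. l b * W b y)) \<le> exp ((\<Sum>b\<in>B. (l b)\<^sup>2) / 2)"
  shows "measure_pmf.prob P {y. 16 * (2 * real (card B) + ln (1 / \<delta>)) < (\<Sum>b\<in>B. (W b y)\<^sup>2)} \<le> \<delta>"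
proof (cases "\<delta> < 1")
  case True
  define d where "d = real (card B)"
  define L where "L = ln (1 / \<delta>)"
  have "0 \<le> L"
    unfolding L_def using True \<open>0 < \<delta>\<close> by simp
  define c where "c = exp (4 * (2 * d + L))"
  define G where "G y = exp ((\<Sum>b\<in>B. (W b y)\<^sup>2) / 4)" for y
  have "0 < c" "\<And>y. 0 \<le> G y"
    unfolding c_def G_def by simp_all
  have "measure_pmf.prob P {y. 16 * (2 * d + L) < (\<Sum>b\<in>B. (W b y)\<^sup>2)}
      \<le> measure_pmf.prob P {y. c \<le> G y}"
    unfolding c_def G_def by (intro measure_pmf.finite_measure_mono) auto
  also have "\<dots> \<le> measure_pmf.expectation P G / c"
    using integral_Markov_inequality_measure[of "measure_pmf P" G UNIV c] finP \<open>0 < c\<close> \<open>\<And>y. 0 \<le> G y\<close>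
    by (simp add: integrable_measure_pmf_finite)
  also have "\<dots> \<le> (6 * exp (1/4)) ^ card B / c"
    unfolding G_def using finP finB mgf \<open>0 < c\<close>
    by (intro divide_right_mono expectation_exp_quarter_sum_squares_le) auto
  also have "\<dots> \<le> exp 6 ^ card B / c"
  proof -
    have "6 * exp (1/4) \<le> exp 5 * exp (1 :: real)"
      using exp_ge_add_one_self[of 5] by (intro mult_mono) auto
    then show ?thesis
      unfolding c_def by (intro divide_right_mono power_mono) (simp_all flip: exp_add)
  qed
  also have "\<dots> = exp (- 2 * d - 4 * L)"
    unfolding c_def d_def by (simp add: exp_of_nat_mult[symmetric] exp_diff[symmetric] algebra_simps)
  also have "\<dots> \<le> exp (- L)"
    using \<open>0 \<le> L\<close> unfolding d_def by simp
  also have "\<dots> = \<delta>"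
    unfolding L_def using \<open>0 < \<delta>\<close> by (simp add: ln_div)
  finally show ?thesis
    unfolding d_def L_def .
next
  case False
  then show ?thesis
    using measure_pmf.prob_le_1 order_trans not_less by blast
qed

section \<open>The MNL estimation error\<close>

lemma mnl_noise_whitened_mgf_le:
  assumes "\<And>t. t \<in> {1..n} \<Longrightarrow> finite (S t)"
    and "finite B" "pairwise (\<lambda>b c. b \<bullet> (gram n S x *v c) = 0) B"
  shows "measure_pmf.expectation (mnl_responses n S x \<theta>)
           (\<lambda>y. exp (\<Sum>b\<in>B. l b * (b \<bullet> mnl_noise n S x \<theta> y / sqrt (b \<bullet> (gram n S x *v b)))))
         \<le> exp ((\<Sum>b\<in>B. (l b)\<^sup>2) / 2)"
proof -
  define V where "V = gram n S x"
  define v where "v = (\<Sum>b\<in>B. (l b / sqrt (b \<bullet> (V *v b))) *\<^sub>R b)"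
  have "(\<Sum>b\<in>B. l b * (b \<bullet> z / sqrt (b \<bullet> (V *v b)))) = v \<bullet> z" for z
    unfolding v_def by (simp add: inner_sum_left)
  then have "measure_pmf.expectation (mnl_responses n S x \<theta>)
      (\<lambda>y. exp (\<Sum>b\<in>B. l b * (b \<bullet> mnl_noise n S x \<theta> y / sqrt (b \<bullet> (V *v b)))))
      \<le> exp (v \<bullet> (V *v v) / 2)"
    using mnl_noise_mgf_le[of n S x \<theta> v] assms(1) unfolding V_def by simp
  also have "v \<bullet> (V *v v) \<le> (\<Sum>b\<in>B. (l b)\<^sup>2)"
  proof -
    have "(l b / sqrt (b \<bullet> (V *v b)))\<^sup>2 * (b \<bullet> (V *v b)) \<le> (l b)\<^sup>2" for b
    proof -
      have "0 \<le> b \<bullet> (V *v b)"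
        unfolding V_def gram_quadratic_form by (simp add: sum_nonneg)
      \<comment> \<open>if b'Vb = 0 the coordinate is the junk value 0 and b drops out of v\<close>
      then show ?thesis
        by (cases "b \<bullet> (V *v b) = 0") (simp_all add: power_divide)
    qed
    then show ?thesis
      unfolding v_def quadratic_form_conjugate_combination[OF assms(2,3)[folded V_def]]
      by (intro sum_mono)
  qed
  finally show ?thesis
    unfolding V_def by simp
qed

theorem lemma15:
  fixes n :: nat and S :: "nat \<Rightarrow> 'i set" and x :: "nat \<Rightarrow> 'i \<Rightarrow> real^'d"
    and \<theta>s :: "real^'d" and \<delta> :: real
  assumes "\<And>t. t \<in> {1..n} \<Longrightarrow> finite (S t)"
    and "pos_def (gram n S x)"
    and "\<delta> > 0"
  shows "measure_pmf.prob (mnl_responses n S x \<theta>s)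
           {y. \<forall>\<theta>hat. mle_score n S x y \<theta>hat = 0 \<longrightarrow>
                 inv_weighted_norm (gram n S x) (J_n n S x \<theta>s \<theta>hat)
                   \<le> 4 * sqrt (2 * real CARD('d) + ln (1 / \<delta>))}
         \<ge> 1 - \<delta>"
proof -
  let ?P = "mnl_responses n S x \<theta>s" and ?r = "16 * (2 * real CARD('d) + ln (1 / \<delta>))"
  obtain B where B: "finite B" "card B = CARD('d)" "0 \<notin> B"
      "pairwise (\<lambda>b c. b \<bullet> (gram n S x *v c) = 0) B"
    using exists_conjugate_basis[OF assms(2)] by blast
  define W where "W b y = b \<bullet> mnl_noise n S x \<theta>s y / sqrt (b \<bullet> (gram n S x *v b))" for b y
  have "inv_weighted_norm (gram n S x) (J_n n S x \<theta>s \<theta>) = sqrt (\<Sum>b\<in>B. (W b y)\<^sup>2)"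
    if "mle_score n S x y \<theta> = 0" for y \<theta>
    unfolding inv_weighted_norm_def J_n_eq_mnl_noise[OF that]
      inverse_quadratic_form_conjugate_basis[OF assms(2) B] W_def
    by (simp add: power_divide gram_quadratic_form sum_nonneg)
  moreover have "sqrt ?r = 4 * sqrt (2 * real CARD('d) + ln (1 / \<delta>))"
    unfolding real_sqrt_mult by (simp add: real_sqrt_unique)
  ultimately have good: "{y. (\<Sum>b\<in>B. (W b y)\<^sup>2) \<le> ?r} \<subseteq> {y. \<forall>\<theta>hat. mle_score n S x y \<theta>hat = 0 \<longrightarrow>
      inv_weighted_norm (gram n S x) (J_n n S x \<theta>s \<theta>hat) \<le> 4 * sqrt (2 * real CARD('d) + ln (1 / \<delta>))}"
    by (auto dest: real_sqrt_le_mono)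
  have "measure_pmf.prob ?P {y. ?r < (\<Sum>b\<in>B. (W b y)\<^sup>2)} \<le> \<delta>"
    unfolding W_def B(2)[symmetric]
    using finite_set_pmf_mnl_responses[OF assms(1)] B(1,4) assms(3)
    by (intro subgaussian_sum_squares_tail mnl_noise_whitened_mgf_le assms(1))
  then have "1 - \<delta> \<le> measure_pmf.prob ?P {y. (\<Sum>b\<in>B. (W b y)\<^sup>2) \<le> ?r}"
    using measure_pmf.prob_compl[of "{y. ?r < (\<Sum>b\<in>B. (W b y)\<^sup>2)}" ?P]
    by (simp add: Compl_eq_Diff_UNIV[symmetric] not_less Collect_neg_eq[symmetric])
  then show ?thesis
    by (rule order_trans) (intro measure_pmf.finite_measure_mono good; simp)
qed

end
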